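(* The function $(a,s,d)\mapsto\bar\sigma_a(s,d)$ on $[0,1]\times(0,\infty)\times\mathbb Z_+$ is strictly decreasing in each of $a$, $s$ and $d$ when the other two variables are held fixed.
   Context: For $a\in[0,1]$ let $\phi_a:\mathbb R\to\mathbb R$ be $\phi_a(z)=z$ for $z>0$ and $\phi_a(z)=az$ for $z\le0$, applied componentwise to vectors. For an integer $d\ge1$ and real $s>0$, let $I_a(s,d)=\mathbb E\|\phi_a(Z)\|^s$ where $Z\sim\mathcal N(0,I_d)$ and $\|\cdot\|$ is the Euclidean norm, and let $\bar\sigma_a(s,d)=I_a(s,d)^{-1/s}$ (the critical weight standard deviation at which a zero-bias width-$d$ network $x^{(k+1)}=\phi_a(W^{(k+1)}x^{(k)})$ with i.i.d. $\mathcal N(0,\sigma^2)$ weights satisfies $\mathbb E\|x^{(k)}\|^s=\|x^{(0)}\|^s$ for all $k$). *)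

theory Defs
  imports "HOL-Probability.Probability"
begin

definition phi :: "real \<Rightarrow> real \<Rightarrow> real" where
  "phi a z = (if z > 0 then z else a * z)"

text \<open>Standard Gaussian measure on R^d, vectors represented as functions on {..<d}.\<close>
definition gauss :: "nat \<Rightarrow> (nat \<Rightarrow> real) measure" where
  "gauss d = PiM {..<d} (\<lambda>_. density lborel std_normal_density)"

definition phinorm :: "real \<Rightarrow> nat \<Rightarrow> (nat \<Rightarrow> real) \<Rightarrow> real" where
  "phinorm a d z = sqrt (\<Sum>i<d. (phi a (z i))\<^sup>2)"

definition Ia :: "real \<Rightarrow> real \<Rightarrow> nat \<Rightarrow> real" where
  "Ia a s d = (\<integral>z. (phinorm a d z) powr s \<partial>(gauss d))"

definition sigma_bar :: "real \<Rightarrow> real \<Rightarrow> nat \<Rightarrow> real" where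
  "sigma_bar a s d = (Ia a s d) powr (- 1 / s)"

end

theory Submission imports Defs begin

text \<open>
  Every comparison reduces to a strict inequality between Gaussian expectations.
  For \<open>a\<close> and \<open>d\<close> the integrand \<open>\<parallel>\<phi>\<^sub>a(Z)\<parallel>\<^sup>s\<close> increases pointwise, and strictly on a set of
  positive probability (a negative coordinate, resp.\ a new nonzero coordinate). For \<open>s\<close>,
  strict Jensen for the strictly convex map \<open>t \<mapsto> t\<^bsup>s\<^sub>2/s\<^sub>1\<^esup>\<close> gives
  \<open>I\<^sub>a(s\<^sub>1,d)\<^bsup>s\<^sub>2/s\<^sub>1\<^esup> < I\<^sub>a(s\<^sub>2,d)\<close>, since \<open>\<parallel>\<phi>\<^sub>a(Z)\<parallel>\<close> is not almost surely constant.
  In each case raising to the negative power \<open>-1/s\<close> reverses the inequality.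
\<close>

abbreviation std_normal :: "real measure" where
  "std_normal \<equiv> density lborel std_normal_density"

lemma prob_space_std_normal: "prob_space std_normal"
  using prob_space_normal_density[of 1 0] by simp

lemma sets_std_normal [measurable_cong]: "sets std_normal = sets borel"
  by simp

lemma prob_space_gauss: "prob_space (gauss d)"
  unfolding gauss_def by (rule prob_space_PiM) (rule prob_space_std_normal)

lemma measurable_gauss_component: "i < d \<Longrightarrow> (\<lambda>z. z i) \<in> gauss d \<rightarrow>\<^sub>M std_normal"
  unfolding gauss_def by (rule measurable_component_singleton) auto

lemma distr_gauss_component: "i < d \<Longrightarrow> distr (gauss d) std_normal (\<lambda>z. z i) = std_normal"
  unfolding gauss_def by (rule distr_PiM_component) (auto intro: prob_space_std_normal)

lemma integrable_gauss_component:
  fixes f :: "real \<Rightarrow> real"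
  assumes "i < d" "integrable std_normal f" "f \<in> borel_measurable borel"
  shows "integrable (gauss d) (\<lambda>z. f (z i))"
proof -
  have "f \<in> borel_measurable std_normal"
    using assms(3) measurable_cong_sets[OF sets_std_normal refl] by blast
  with assms show ?thesis
    using integrable_distr_eq[OF measurable_gauss_component] distr_gauss_component by metis
qed

lemma emeasure_std_normal_interval_pos: "c < e \<Longrightarrow> emeasure std_normal {c<..<e} \<noteq> 0"
proof
  assume "c < e" "emeasure std_normal {c<..<e} = 0"
  then have "{c<..<e} \<in> null_sets std_normal"
    by auto
  then have "AE x\<in>{c<..<e} in lborel. ennreal (std_normal_density x) = 0"
    by (subst (asm) null_sets_density_iff) auto
  then have "AE x in lborel. x \<notin> {c<..<e}"
    by eventually_elim (metis ennreal_eq_0_iff normal_density_pos zero_less_one not_le)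
  then have "{c<..<e} \<in> null_sets lborel"
    by (subst AE_iff_null_sets) auto
  with \<open>c < e\<close> show False by auto
qed

lemma emeasure_gauss_component_interval_pos:
  assumes "i < d" "c < e"
  shows "emeasure (gauss d) {z \<in> space (gauss d). c < z i \<and> z i < e} \<noteq> 0"
proof -
  have "{z \<in> space (gauss d). c < z i \<and> z i < e} = (\<lambda>z. z i) -` {c<..<e} \<inter> space (gauss d)"
    by auto
  also have "emeasure (gauss d) \<dots> = emeasure (distr (gauss d) std_normal (\<lambda>z. z i)) {c<..<e}"
    using assms by (intro emeasure_distr[symmetric] measurable_gauss_component) auto
  finally show ?thesis
    using assms distr_gauss_component emeasure_std_normal_interval_pos by simp
qed

lemma gauss_integral_strict_mono:
  fixes f g :: "(nat \<Rightarrow> real) \<Rightarrow> real"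
  assumes "integrable (gauss d) f" "integrable (gauss d) g" "i < d" "c < e"
    and "\<And>z. f z \<le> g z" "\<And>z. c < z i \<Longrightarrow> z i < e \<Longrightarrow> f z < g z"
  shows "(\<integral>z. f z \<partial>gauss d) < (\<integral>z. g z \<partial>gauss d)"
proof -
  interpret prob_space "gauss d" by (rule prob_space_gauss)
  let ?A = "{z \<in> space (gauss d). c < z i \<and> z i < e}"
  have "?A = (\<lambda>z. z i) -` {c<..<e} \<inter> space (gauss d)"
    by auto
  also have "\<dots> \<in> sets (gauss d)"
    using measurable_gauss_component[OF \<open>i < d\<close>] measurable_sets by fastforce
  finally have "?A \<in> sets (gauss d)" .
  moreover have "f z \<noteq> g z" if "z \<in> ?A" for z
    using that assms(6) by force
  ultimately show ?thesis
    using assms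
    by (intro integral_less_AE[where A = ?A] emeasure_gauss_component_interval_pos AE_I2) auto
qed

lemma measurable_phi [measurable]: "phi a \<in> borel_measurable borel"
  unfolding phi_def by measurable

lemma measurable_phinorm [measurable]: "d \<le> d' \<Longrightarrow> phinorm a d \<in> borel_measurable (gauss d')"
  unfolding phinorm_def gauss_def by measurable

lemma phinorm_nonneg: "0 \<le> phinorm a d z"
  unfolding phinorm_def by (intro real_sqrt_ge_zero sum_nonneg) auto

lemma abs_phi_le_phinorm: "i < d \<Longrightarrow> \<bar>phi a (z i)\<bar> \<le> phinorm a d z"
  unfolding phinorm_def
  by (metis real_sqrt_abs real_sqrt_le_mono member_le_sum zero_le_power2 finite_lessThan lessThan_iff)

lemma phi_square_le: "0 \<le> a \<Longrightarrow> a \<le> 1 \<Longrightarrow> (phi a x)\<^sup>2 \<le> x\<^sup>2"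
  unfolding phi_def
  by (auto simp: power_mult_distrib)
    (smt (verit, best) mult_left_le_one_le power2_eq_square zero_le_power2)

lemma phi_square_mono:
  assumes "0 \<le> a1" "a1 \<le> a2"
  shows "(phi a1 x)\<^sup>2 \<le> (phi a2 x)\<^sup>2"
    and "x < 0 \<Longrightarrow> a1 < a2 \<Longrightarrow> (phi a1 x)\<^sup>2 < (phi a2 x)\<^sup>2"
  using assms unfolding phi_def
  by (auto simp: power_mult_distrib intro!: mult_right_mono power_mono mult_strict_right_mono power_strict_mono)

lemma phinorm_mono_slope:
  assumes "0 \<le> a1" "a1 \<le> a2"
  shows "phinorm a1 d z \<le> phinorm a2 d z"
  unfolding phinorm_def using assms by (intro real_sqrt_le_mono sum_mono phi_square_mono) auto

lemma phinorm_strict_mono_slope: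
  assumes "0 \<le> a1" "a1 < a2" "i < d" "z i < 0"
  shows "phinorm a1 d z < phinorm a2 d z"
  unfolding phinorm_def using assms
  by (intro real_sqrt_less_mono sum_strict_mono_ex1 bexI[of _ i] ballI phi_square_mono) auto

lemma phinorm_mono_dim: "d1 \<le> d2 \<Longrightarrow> phinorm a d1 z \<le> phinorm a d2 z"
  unfolding phinorm_def by (intro real_sqrt_le_mono sum_mono2) auto

lemma phinorm_strict_mono_dim:
  assumes "d1 < d2" "0 < z d1"
  shows "phinorm a d1 z < phinorm a d2 z"
  unfolding phinorm_def using assms
  by (intro real_sqrt_less_mono sum_strict_mono2[where b = d1]) (auto simp: phi_def)

lemma powr_le_one_plus_power:
  fixes x s :: real
  assumes "0 \<le> x" "0 < s"
  shows "x powr s \<le> 1 + x ^ nat \<lceil>s\<rceil>"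
proof (cases "x \<le> 1")
  case True
  then have "x powr s \<le> 1"
    using assms powr_mono2[of s x 1] by simp
  then show ?thesis
    using assms by (smt (verit) zero_le_power)
next
  case False
  then have "x powr s \<le> x powr real (nat \<lceil>s\<rceil>)"
    by (intro powr_mono) (auto, linarith)
  then show ?thesis
    using False by (simp add: powr_realpow)
qed

lemma phinorm_powr_bound:
  assumes "0 \<le> a" "a \<le> 1" "0 < s" "0 < d"
  shows "phinorm a d z powr s \<le> sqrt d powr s * (1 + (\<Sum>i<d. \<bar>z i\<bar> ^ nat \<lceil>s\<rceil>))"
proof -
  define M where "M = Max ((\<lambda>i. \<bar>z i\<bar>) ` {..<d})"
  have "M \<in> (\<lambda>i. \<bar>z i\<bar>) ` {..<d}"
    unfolding M_def using \<open>0 < d\<close> by (intro Max_in) auto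
  then obtain j where j: "j < d" "M = \<bar>z j\<bar>"
    by auto
  have M_ge: "\<bar>z i\<bar> \<le> M" if "i < d" for i
    unfolding M_def using that by (intro Max_ge) auto
  have "(\<Sum>i<d. (phi a (z i))\<^sup>2) \<le> (\<Sum>i<d. M\<^sup>2)"
    using M_ge phi_square_le[OF assms(1,2)] j
    by (intro sum_mono) (metis abs_le_square_iff abs_abs lessThan_iff order_trans)
  then have "phinorm a d z \<le> sqrt (d * M\<^sup>2)"
    unfolding phinorm_def by (simp add: real_sqrt_le_mono)
  also have "\<dots> = sqrt d * M"
    using j by (simp add: real_sqrt_mult)
  finally have "phinorm a d z powr s \<le> sqrt d powr s * M powr s"
    using assms j by (simp add: powr_mono2 phinorm_nonneg flip: powr_mult)
  also have "\<dots> \<le> sqrt d powr s * (1 + (\<Sum>i<d. \<bar>z i\<bar> ^ nat \<lceil>s\<rceil>))"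
  proof (intro mult_left_mono add_left_mono order_trans[OF powr_le_one_plus_power])
    show "M ^ nat \<lceil>s\<rceil> \<le> (\<Sum>i<d. \<bar>z i\<bar> ^ nat \<lceil>s\<rceil>)"
      unfolding j(2) using j by (intro member_le_sum) auto
  qed (use assms j in auto)
  finally show ?thesis .
qed

lemma integrable_phinorm_powr:
  assumes "0 \<le> a" "a \<le> 1" "0 < s" "d \<le> d'"
  shows "integrable (gauss d') (\<lambda>z. phinorm a d z powr s)"
proof (cases "d = 0")
  case True
  then show ?thesis
    by (simp add: phinorm_def)
next
  case False
  interpret prob_space "gauss d'" by (rule prob_space_gauss)
  let ?n = "nat \<lceil>s\<rceil>"
  have "integrable (gauss d') (\<lambda>z. \<bar>z i\<bar> ^ ?n)" if "i < d" for i
    using that assms integrable_std_normal_moment_abs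
    by (intro integrable_gauss_component) (auto simp: integrable_density)
  then have "integrable (gauss d') (\<lambda>z. sqrt d powr s * (1 + (\<Sum>i<d. \<bar>z i\<bar> ^ ?n)))"
    by (auto intro!: Bochner_Integration.integrable_add Bochner_Integration.integrable_sum)
  then show ?thesis
  proof (rule Bochner_Integration.integrable_bound)
    show "(\<lambda>z. phinorm a d z powr s) \<in> borel_measurable (gauss d')"
      using assms by measurable
    show "AE z in gauss d'. norm (phinorm a d z powr s)
        \<le> norm (sqrt d powr s * (1 + (\<Sum>i<d. \<bar>z i\<bar> ^ ?n)))"
      using assms False by (intro AE_I2) (auto simp: sum_nonneg phinorm_powr_bound)
  qed
qed

lemma Ia_eq_integral_higher_dim:
  assumes "d1 \<le> d2"
  shows "Ia a s d1 = (\<integral>z. phinorm a d1 z powr s \<partial>gauss d2)"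
proof -
  interpret product_prob_space "\<lambda>_::nat. std_normal"
    by (simp add: product_prob_space_def product_prob_space_axioms_def product_sigma_finite_def
        prob_space_std_normal prob_space_imp_sigma_finite)
  have "gauss d1 = distr (gauss d2) (gauss d1) (\<lambda>z. restrict z {..<d1})"
    unfolding gauss_def using assms by (intro distr_restrict) auto
  then have "Ia a s d1
      = (\<integral>z. phinorm a d1 z powr s \<partial>distr (gauss d2) (gauss d1) (\<lambda>z. restrict z {..<d1}))"
    unfolding Ia_def by simp
  also have "\<dots> = (\<integral>z. phinorm a d1 (restrict z {..<d1}) powr s \<partial>gauss d2)"
  proof (rule integral_distr)
    show "(\<lambda>z. restrict z {..<d1}) \<in> gauss d2 \<rightarrow>\<^sub>M gauss d1"
      unfolding gauss_def using assms by (intro measurable_restrict_subset) auto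
  qed measurable
  also have "\<dots> = (\<integral>z. phinorm a d1 z powr s \<partial>gauss d2)"
    by (simp add: phinorm_def)
  finally show ?thesis .
qed

lemma Ia_pos:
  assumes "0 \<le> a" "a \<le> 1" "0 < s" "1 \<le> d"
  shows "0 < Ia a s d"
proof -
  have "(\<integral>z. 0 \<partial>gauss d) < (\<integral>z. phinorm a d z powr s \<partial>gauss d)"
  proof (rule gauss_integral_strict_mono[where i = 0 and c = 0 and e = 1])
    fix z :: "nat \<Rightarrow> real"
    assume "0 < z 0"
    then have "0 < \<bar>phi a (z 0)\<bar>"
      by (simp add: phi_def)
    also have "\<dots> \<le> phinorm a d z"
      using assms by (intro abs_phi_le_phinorm) auto
    finally show "0 < phinorm a d z powr s"
      by simp
  qed (use assms in \<open>auto intro: integrable_phinorm_powr\<close>)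
  then show ?thesis
    by (simp add: Ia_def)
qed

lemma Ia_strict_mono_slope:
  assumes "0 \<le> a1" "a1 < a2" "a2 \<le> 1" "0 < s" "1 \<le> d"
  shows "Ia a1 s d < Ia a2 s d"
  unfolding Ia_def
proof (rule gauss_integral_strict_mono[where i = 0 and c = "-1" and e = 0])
  fix z :: "nat \<Rightarrow> real"
  show "phinorm a1 d z powr s \<le> phinorm a2 d z powr s"
    using assms by (intro powr_mono2 phinorm_mono_slope) (auto simp: phinorm_nonneg)
  assume "z 0 < 0"
  then show "phinorm a1 d z powr s < phinorm a2 d z powr s"
    using assms by (intro powr_less_mono2 phinorm_strict_mono_slope) (auto simp: phinorm_nonneg)
qed (use assms in \<open>auto intro: integrable_phinorm_powr\<close>)

lemma Ia_strict_mono_dim: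
  assumes "0 \<le> a" "a \<le> 1" "0 < s" "d1 < d2"
  shows "Ia a s d1 < Ia a s d2"
  unfolding Ia_eq_integral_higher_dim[OF less_imp_le[OF \<open>d1 < d2\<close>]]
  unfolding Ia_def
proof (rule gauss_integral_strict_mono[where i = d1 and c = 0 and e = 1])
  fix z :: "nat \<Rightarrow> real"
  show "phinorm a d1 z powr s \<le> phinorm a d2 z powr s"
    using assms by (intro powr_mono2 phinorm_mono_dim) (auto simp: phinorm_nonneg)
  assume "0 < z d1"
  then show "phinorm a d1 z powr s < phinorm a d2 z powr s"
    using assms by (intro powr_less_mono2 phinorm_strict_mono_dim) (auto simp: phinorm_nonneg)
qed (use assms in \<open>auto intro: integrable_phinorm_powr\<close>)

lemma powr_tangent_less:
  fixes p m y :: real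
  assumes "1 < p" "0 < m" "0 \<le> y" "y \<noteq> m"
  shows "m powr p + p * m powr (p - 1) * (y - m) < y powr p"
proof -
  have deriv: "((\<lambda>t. t powr p) has_real_derivative p * x powr (p - 1)) (at x)" if "0 < x" for x
    using that by (rule has_real_derivative_powr)
  have m_powr: "m powr (p - 1) * m = m powr p"
    using \<open>0 < m\<close> powr_add[of m "p - 1" 1] by simp
  consider "y = 0" | "0 < y" "m < y" | "0 < y" "y < m"
    using assms by fastforce
  then show ?thesis
  proof cases
    case 1
    have "m powr p + p * m powr (p - 1) * (y - m) = (1 - p) * m powr p"
      using 1 m_powr by (simp add: algebra_simps)
    also have "\<dots> < 0"
      using assms by (intro mult_neg_pos) auto
    finally show ?thesis
      using 1 by simp
  next
    case 2
    obtain \<xi> where \<xi>: "m < \<xi>" "y powr p - m powr p = (y - m) * (p * \<xi> powr (p - 1))"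
      using MVT2[OF \<open>m < y\<close>, of "\<lambda>t. t powr p" "\<lambda>t. p * t powr (p - 1)"] deriv assms by force
    have "m powr (p - 1) < \<xi> powr (p - 1)"
      using \<xi> assms by (intro powr_less_mono2) auto
    then have "p * m powr (p - 1) * (y - m) < (y - m) * (p * \<xi> powr (p - 1))"
      using 2 assms by (simp add: mult.commute mult.left_commute)
    then show ?thesis
      using \<xi> by linarith
  next
    case 3
    obtain \<xi> where \<xi>: "y < \<xi>" "\<xi> < m" "m powr p - y powr p = (m - y) * (p * \<xi> powr (p - 1))"
      using MVT2[OF \<open>y < m\<close>, of "\<lambda>t. t powr p" "\<lambda>t. p * t powr (p - 1)"] deriv 3 by force
    have "\<xi> powr (p - 1) < m powr (p - 1)"
      using \<xi> 3 assms by (intro powr_less_mono2) auto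
    then have "(m - y) * (p * \<xi> powr (p - 1)) < p * m powr (p - 1) * (m - y)"
      using 3 assms by (simp add: mult.commute mult.left_commute)
    then show ?thesis
      using \<xi> by (simp add: algebra_simps)
  qed
qed

text \<open>Integrating the tangent line of \<open>t \<mapsto> t powr (s\<^sub>2/s\<^sub>1)\<close> at the mean \<open>m\<close> of
  \<open>\<parallel>\<phi>\<^sub>a(Z)\<parallel>\<^bsup>s\<^sub>1\<^esup>\<close> gives \<open>m powr (s\<^sub>2/s\<^sub>1)\<close>; the gap is strict wherever
  \<open>\<parallel>\<phi>\<^sub>a(Z)\<parallel> > m powr (1/s\<^sub>1)\<close>, e.g.\ when the first coordinate exceeds that value.\<close>

lemma Ia_powr_less:
  assumes "0 \<le> a" "a \<le> 1" "0 < s1" "s1 < s2" "1 \<le> d"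
  shows "Ia a s1 d powr (s2 / s1) < Ia a s2 d"
proof -
  interpret prob_space "gauss d" by (rule prob_space_gauss)
  define m where "m = Ia a s1 d"
  define p where "p = s2 / s1"
  define c where "c = m powr (1 / s1)"
  have "0 < m" "1 < p" "0 < c"
    using assms Ia_pos[of a s1 d] by (auto simp: m_def p_def c_def)
  have phinorm_powr_p: "(phinorm a d z powr s1) powr p = phinorm a d z powr s2" for z
    unfolding p_def using assms by (simp add: powr_powr)
  have int_s1: "integrable (gauss d) (\<lambda>z. phinorm a d z powr s1)"
    using assms by (intro integrable_phinorm_powr) auto
  have "m powr p = (\<integral>z. m powr p + p * m powr (p - 1) * (phinorm a d z powr s1 - m) \<partial>gauss d)"
    using int_s1 by (simp add: m_def Ia_def prob_space)
  also have "\<dots> < (\<integral>z. phinorm a d z powr s2 \<partial>gauss d)"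
  proof (rule gauss_integral_strict_mono[where i = 0 and c = c and e = "c + 1"])
    fix z :: "nat \<Rightarrow> real"
    show "m powr p + p * m powr (p - 1) * (phinorm a d z powr s1 - m) \<le> phinorm a d z powr s2"
      using powr_tangent_less[OF \<open>1 < p\<close> \<open>0 < m\<close> powr_ge_zero] phinorm_powr_p[of z]
      by (cases "phinorm a d z powr s1 = m") (simp, metis less_imp_le)
    assume "c < z 0" "z 0 < c + 1"
    then have "c < \<bar>phi a (z 0)\<bar>"
      using \<open>0 < c\<close> by (simp add: phi_def)
    also have "\<dots> \<le> phinorm a d z"
      using assms by (intro abs_phi_le_phinorm) auto
    finally have "m < phinorm a d z powr s1"
      using \<open>0 < c\<close> \<open>0 < m\<close> assms powr_less_mono2[of s1 c "phinorm a d z"]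
      by (simp add: c_def powr_powr)
    then show "m powr p + p * m powr (p - 1) * (phinorm a d z powr s1 - m) < phinorm a d z powr s2"
      using powr_tangent_less[OF \<open>1 < p\<close> \<open>0 < m\<close> powr_ge_zero] phinorm_powr_p[of z]
      by (metis less_irrefl)
  qed (use assms int_s1 in \<open>auto intro: integrable_phinorm_powr\<close>)
  finally show ?thesis
    by (simp add: m_def p_def Ia_def)
qed

theorem mainTheorem6:
  shows "(\<forall>a1 a2 s d. 0 \<le> a1 \<and> a1 < a2 \<and> a2 \<le> 1 \<and> 0 < s \<and> 1 \<le> d
            \<longrightarrow> sigma_bar a2 s d < sigma_bar a1 s d)
       \<and> (\<forall>a s1 s2 d. 0 \<le> a \<and> a \<le> 1 \<and> 0 < s1 \<and> s1 < s2 \<and> 1 \<le> d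
            \<longrightarrow> sigma_bar a s2 d < sigma_bar a s1 d)
       \<and> (\<forall>a s d1 d2. 0 \<le> a \<and> a \<le> 1 \<and> 0 < s \<and> 1 \<le> d1 \<and> d1 < d2
            \<longrightarrow> sigma_bar a s d2 < sigma_bar a s d1)"
proof (intro conjI allI impI)
  fix a1 a2 s :: real and d :: nat
  assume h: "0 \<le> a1 \<and> a1 < a2 \<and> a2 \<le> 1 \<and> 0 < s \<and> 1 \<le> d"
  then have "0 < Ia a1 s d" "Ia a1 s d < Ia a2 s d"
    by (simp_all add: Ia_pos Ia_strict_mono_slope)
  with h show "sigma_bar a2 s d < sigma_bar a1 s d"
    unfolding sigma_bar_def by (intro powr_less_mono2_neg) (auto simp: divide_neg_pos)
next
  fix a s1 s2 :: real and d :: nat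
  assume h: "0 \<le> a \<and> a \<le> 1 \<and> 0 < s1 \<and> s1 < s2 \<and> 1 \<le> d"
  then have "0 < Ia a s1 d" "Ia a s1 d powr (s2 / s1) < Ia a s2 d"
    by (simp_all add: Ia_pos Ia_powr_less)
  then have "Ia a s2 d powr (- 1 / s2) < (Ia a s1 d powr (s2 / s1)) powr (- 1 / s2)"
    using h by (intro powr_less_mono2_neg) auto
  also have "\<dots> = sigma_bar a s1 d"
    unfolding sigma_bar_def using h by (simp add: powr_powr)
  finally show "sigma_bar a s2 d < sigma_bar a s1 d"
    unfolding sigma_bar_def .
next
  fix a s :: real and d1 d2 :: nat
  assume h: "0 \<le> a \<and> a \<le> 1 \<and> 0 < s \<and> 1 \<le> d1 \<and> d1 < d2"
  then have "0 < Ia a s d1" "Ia a s d1 < Ia a s d2"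
    by (simp_all add: Ia_pos Ia_strict_mono_dim)
  with h show "sigma_bar a s d2 < sigma_bar a s d1"
    unfolding sigma_bar_def by (intro powr_less_mono2_neg) auto
qed

end
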